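(* Consider the planted $k$-factor model with $p=\lambda/n$ and suppose $\lambda k\le 1+\epsilon$ for some $\epsilon\in(0,1)$. Let $$\beta=\max\Big\{4\log(1+\epsilon),\ \sqrt{\tfrac{8\log n}{n}}\Big\}$$ and let $\widehat H$ be any estimator that outputs a $k$-factor contained in $G$. Then, conditioned on any realization of $H^*$, $$\mathbb P\{\ell(\widehat H,H^* )\ge 2\beta\mid H^*\}\le e^{1/2}\beta\qquad\text{and}\qquad \mathbb E[\ell(\widehat H,H^* )\mid H^*]\le 6\beta.$$
   Context: Planted $k$-factor model: fix an integer $k\ge1$ and $n$ with $kn$ even. A $k$-factor on $[n]$ is a $k$-regular simple graph with vertex set $[n]$, identified with its edge set; $\mathcal H$ is the set of all $k$-factors on $[n]$. Let $p=\lambda/n\in[0,1]$. Draw $H^*$ uniformly at random from $\mathcal H$ and, independently, $G_0\sim\mathcal G(n,p)$ (each of the $\binom n2$ vertex pairs is an edge independently with probability $p$). The observed graph is $G=G_0\cup H^*$. An estimator is a function $\widehat H=\widehat H(G)$ taking values in sets of edges of the complete graph on $[n]$. The reconstruction error is $\ell(H^*,\widehat H)=\ell(\widehat H,H^* )=|H^*\triangle\widehat H|/|H^*|$, where $|H^*|=kn/2$. *)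

theory Defs
  imports "HOL-Probability.Probability"
begin

text \<open>Vertex set [n] = {1..n}; an edge is a 2-element set of vertices;
  a graph is identified with its edge set.\<close>

definition all_pairs :: "nat \<Rightarrow> nat set set" where
  "all_pairs n = {e. \<exists>u v. e = {u, v} \<and> u \<noteq> v \<and> u \<in> {1..n} \<and> v \<in> {1..n}}"

definition is_k_factor :: "nat \<Rightarrow> nat \<Rightarrow> nat set set \<Rightarrow> bool" where
  "is_k_factor n k H \<longleftrightarrow> H \<subseteq> all_pairs n \<and> (\<forall>v\<in>{1..n}. card {e\<in>H. v \<in> e} = k)"

definition k_factors :: "nat \<Rightarrow> nat \<Rightarrow> nat set set set" where
  "k_factors n k = {H. is_k_factor n k H}"

definition gnp :: "nat \<Rightarrow> real \<Rightarrow> nat set set pmf" where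
  "gnp n p = map_pmf (\<lambda>f. {e \<in> all_pairs n. f e})
              (Pi_pmf (all_pairs n) False (\<lambda>_. bernoulli_pmf p))"

definition recon_loss :: "nat set set \<Rightarrow> nat set set \<Rightarrow> real" where
  "recon_loss Hs H' = real (card (sym_diff Hs H')) / real (card Hs)"

end

theory Submission
  imports Defs "HOL-Analysis.Harmonic_Numbers"
begin

(*
  A k-factor H with |H - H*| = m is determined by the m edges of H* it drops together with
  m new edges restoring exactly the degrees of the dropped ones; matching up the 2m
  endpoints of the dropped edges shows that there are at most C(a, m) 2^m m! such H,
  where a = |H*| = kn/2.  The new edges of the estimate all lie in G0, which has
  probability p^m, so a union bound over m >= beta a bounds the probability of a large
  loss by the sum of C(a, m) (2p)^m m!.  Since C(a, m) m! <= a^m exp(-m(m-1)/(2a)) and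
  2ap = lam k <= 1 + eps <= exp(beta/4), each term is at most exp(1/2) exp(-beta m/4),
  and the geometric tail from beta a onwards is at most beta by the choice of beta.
  The expectation bound follows because the loss never exceeds 2.
*)

section \<open>Degrees and k-factors\<close>

lemma handshake:
  assumes V: "finite V" and E: "E \<subseteq> {e. \<exists>u v. e = {u, v} \<and> u \<noteq> v \<and> u \<in> V \<and> v \<in> V}"
  shows "(\<Sum>v\<in>V. card {e\<in>E. v \<in> e}) = 2 * card E"
proof -
  have "finite E"
    using E V by (auto intro: finite_subset[of E "Pow V"])
  then have "(\<Sum>v\<in>V. card {e\<in>E. v \<in> e}) = (\<Sum>v\<in>V. \<Sum>e\<in>E. of_bool (v \<in> e))"
    by (simp add: Int_def)
  also have "\<dots> = (\<Sum>e\<in>E. \<Sum>v\<in>V. of_bool (v \<in> e))"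
    by (rule sum.swap)
  also have "\<dots> = (\<Sum>e\<in>E. 2)"
  proof (rule sum.cong[OF refl])
    fix e assume "e \<in> E"
    then obtain u v where "e = {u, v}" "u \<noteq> v" "u \<in> V" "v \<in> V" using E by blast
    then have "V \<inter> {v. v \<in> e} = {u, v}" by auto
    with \<open>u \<noteq> v\<close> V show "(\<Sum>v\<in>V. of_bool (v \<in> e)) = (2::nat)" by simp
  qed
  finally show ?thesis by simp
qed

lemma all_pairs_subset_Pow: "all_pairs n \<subseteq> Pow {1..n}"
  unfolding all_pairs_def by auto

lemma finite_all_pairs: "finite (all_pairs n)"
  using all_pairs_subset_Pow by (rule finite_subset) simp

lemma all_pairs_eq_empty: "n \<le> 1 \<Longrightarrow> all_pairs n = {}"
  unfolding all_pairs_def by auto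

lemma card_all_pairs_elem: "e \<in> all_pairs n \<Longrightarrow> card e = 2"
  by (auto simp: all_pairs_def)

lemma k_factor_finite: "is_k_factor n k H \<Longrightarrow> finite H"
  unfolding is_k_factor_def using finite_all_pairs finite_subset by blast

lemma finite_k_factors: "finite (k_factors n k)"
  by (rule finite_subset[of _ "Pow (all_pairs n)"])
     (auto simp: k_factors_def is_k_factor_def finite_all_pairs)

lemma k_factor_card: "is_k_factor n k H \<Longrightarrow> 2 * card H = k * n"
  using handshake[of "{1..n}" H] unfolding is_k_factor_def all_pairs_def by (auto simp: mult.commute)

lemma k_factor_degree_diff:
  assumes H: "is_k_factor n k H" and H': "is_k_factor n k H'"
  shows "card {e\<in>H - H'. v \<in> e} = card {e\<in>H' - H. v \<in> e}"
proof (cases "v \<in> {1..n}")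
  case True
  have split: "card {e\<in>A. v \<in> e} = card ({e\<in>A. v \<in> e} \<inter> B) + card {e\<in>A - B. v \<in> e}"
    if "finite A" for A B :: "nat set set"
  proof -
    have "card {e\<in>A. v \<in> e} = card ({e\<in>A. v \<in> e} \<inter> B) + card ({e\<in>A. v \<in> e} - B)"
      by (rule card_Int_Diff) (use that in simp)
    also have "{e\<in>A. v \<in> e} - B = {e\<in>A - B. v \<in> e}" by auto
    finally show ?thesis .
  qed
  have swap: "{e\<in>H. v \<in> e} \<inter> H' = {e\<in>H'. v \<in> e} \<inter> H" by auto
  have "card {e\<in>H. v \<in> e} = k" "card {e\<in>H'. v \<in> e} = k"
    using True H H' unfolding is_k_factor_def by auto
  then show ?thesis
    using split[OF k_factor_finite[OF H], of H'] split[OF k_factor_finite[OF H'], of H]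
    unfolding swap by linarith
next
  case False
  then have "{e\<in>H - H'. v \<in> e} = {}" "{e\<in>H' - H. v \<in> e} = {}"
    using H H' all_pairs_subset_Pow unfolding is_k_factor_def by blast+
  then show ?thesis by (simp only: card.empty)
qed

lemma k_factor_card_diff:
  assumes H: "is_k_factor n k H" and H': "is_k_factor n k H'"
  shows "card (H - H') = card (H' - H)"
proof -
  have two_sets: "A \<subseteq> {e. \<exists>u v. e = {u, v} \<and> u \<noteq> v \<and> u \<in> {1..n} \<and> v \<in> {1..n}}"
    if "A \<subseteq> all_pairs n" for A
    using that unfolding all_pairs_def by blast
  have "2 * card (H - H') = (\<Sum>v\<in>{1..n}. card {e\<in>H - H'. v \<in> e})"
    using H by (intro handshake[symmetric] two_sets) (auto simp: is_k_factor_def)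
  also have "\<dots> = (\<Sum>v\<in>{1..n}. card {e\<in>H' - H. v \<in> e})"
    using k_factor_degree_diff[OF H H'] by simp
  also have "\<dots> = 2 * card (H' - H)"
    using H' by (intro handshake two_sets) (auto simp: is_k_factor_def)
  finally show ?thesis by simp
qed

lemma k_factor_card_diff_le:
  assumes "is_k_factor n k H" and "is_k_factor n k H'"
  shows "card (H - H') \<le> card H'"
  using k_factor_card_diff[OF assms] k_factor_finite[OF assms(2)] by (simp add: card_mono)

lemma recon_loss_k_factor:
  assumes H: "is_k_factor n k H" and Hs: "is_k_factor n k Hs"
  shows "recon_loss Hs H = 2 * real (card (H - Hs)) / real (card Hs)"
proof -
  have "card (sym_diff Hs H) = card (Hs - H) + card (H - Hs)"
    using k_factor_finite[OF H] k_factor_finite[OF Hs] by (intro card_Un_disjoint) auto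
  also have "\<dots> = 2 * card (H - Hs)" using k_factor_card_diff[OF H Hs] by simp
  finally show ?thesis unfolding recon_loss_def by simp
qed

lemma recon_loss_le_2:
  assumes "is_k_factor n k H" and "is_k_factor n k Hs"
  shows "recon_loss Hs H \<le> 2"
proof -
  have "real (card (H - Hs)) / real (card Hs) \<le> 1"
    using k_factor_card_diff_le[OF assms] by (auto simp: divide_le_eq_1)
  then show ?thesis unfolding recon_loss_k_factor[OF assms] times_divide_eq_right[symmetric] by linarith
qed

section \<open>Counting k-factors close to a given one\<close>

definition pairings :: "'a set \<Rightarrow> 'a set set set" where
  "pairings S = {P. partition_on S P \<and> (\<forall>p\<in>P. card p = 2)}"

lemma finite_pairings: "finite S \<Longrightarrow> finite (pairings S)"
  by (rule finite_subset[OF _ finitely_many_partition_on]) (auto simp: pairings_def)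

lemma card_pairings_le:
  assumes "finite S" and "card S = 2 * m"
  shows "card (pairings S) \<le> 2 ^ m * fact m"
  using assms
proof (induction m arbitrary: S)
  case 0
  then have "pairings S = {{}}" by (auto simp: pairings_def partition_on_empty)
  then show ?case by simp
next
  case (Suc m)
  then obtain x where x: "x \<in> S" by fastforce
  define T where "T = (SIGMA y:S - {x}. pairings (S - {x, y}))"
  have "pairings S \<subseteq> (\<lambda>(y, Q). insert {x, y} Q) ` T"
  proof
    fix P assume "P \<in> pairings S"
    then have P: "partition_on S P" "\<forall>p\<in>P. card p = 2" by (auto simp: pairings_def)
    then obtain p where p: "p \<in> P" "x \<in> p" using x by (auto dest: partition_onD1)
    then obtain y where y: "p = {x, y}" "x \<noteq> y" using P(2) by (auto simp: card_2_iff doubleton_eq_iff)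
    have "disjnt p (\<Union>(P - {p}))"
      using partition_onD2[OF P(1)] p(1) by (auto simp: disjoint_def disjnt_def)
    moreover have "partition_on S (insert p (P - {p}))" using P(1) p(1) by (simp add: insert_absorb)
    ultimately have "partition_on (S - p) (P - {p})" "p \<subseteq> S"
      using partition_on_insert by blast+
    with y P(2) have "(y, P - {p}) \<in> T" by (auto simp: T_def pairings_def)
    moreover have "P = (\<lambda>(y, Q). insert {x, y} Q) (y, P - {p})" using p(1) y by auto
    ultimately show "P \<in> (\<lambda>(y, Q). insert {x, y} Q) ` T" by (metis image_eqI)
  qed
  moreover have "finite T" using Suc.prems by (auto simp: T_def intro!: finite_pairings)
  ultimately have "card (pairings S) \<le> card T" by (meson card_image_le card_mono finite_imageI order_trans)
  also have "card T = (\<Sum>y\<in>S - {x}. card (pairings (S - {x, y})))"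
    using Suc.prems by (auto simp: T_def intro!: card_SigmaI finite_pairings)
  also have "\<dots> \<le> (\<Sum>y\<in>S - {x}. 2 ^ m * fact m)"
  proof (rule sum_mono)
    fix y assume "y \<in> S - {x}"
    then have "card (S - {x, y}) = 2 * m" using Suc.prems x by (subst card_Diff_subset) auto
    then show "card (pairings (S - {x, y})) \<le> 2 ^ m * fact m" using Suc.IH Suc.prems by simp
  qed
  also have "\<dots> = (2 * m + 1) * (2 ^ m * fact m)" using Suc.prems x by simp
  also have "\<dots> \<le> 2 ^ Suc m * fact (Suc m)" by (simp add: algebra_simps)
  finally show ?case .
qed

lemma stubs_pairing_of_degree_bijections:
  fixes R :: "'a set set" and S :: "('b \<times> 'a) set"
  assumes R: "\<forall>e\<in>R. card e = 2"
    and \<sigma>: "\<And>v. bij_betw (\<sigma> v) {e\<in>R. v \<in> e} {s\<in>S. snd s = v}"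
  shows "R \<in> (\<lambda>P. (\<lambda>q. snd ` q) ` P) ` pairings S"
proof -
  have \<sigma>_stub: "\<sigma> v e \<in> S \<and> snd (\<sigma> v e) = v" if "e \<in> R" "v \<in> e" for v e
    using bij_betwE[OF \<sigma>[of v]] that by blast
  define F where "F e = (\<lambda>v. \<sigma> v e) ` e" for e
  have snd_F: "snd ` F e = e" if "e \<in> R" for e
  proof -
    have "(\<lambda>v. snd (\<sigma> v e)) ` e = (\<lambda>v. v) ` e" by (rule image_cong) (use \<sigma>_stub[OF that] in auto)
    then show ?thesis by (simp add: F_def image_image)
  qed
  have card_F: "card (F e) = 2" if e: "e \<in> R" for e
  proof -
    obtain u w where "e = {u, w}" "u \<noteq> w" using R e by (auto simp: card_2_iff)
    moreover have "\<sigma> u e \<noteq> \<sigma> w e"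
      using \<sigma>_stub[OF e, of u] \<sigma>_stub[OF e, of w] calculation by auto
    ultimately show ?thesis by (simp add: F_def)
  qed
  have disjoint_F: "F e \<inter> F e' = {}" if "e \<in> R" "e' \<in> R" "e \<noteq> e'" for e e'
  proof (rule ccontr)
    assume "F e \<inter> F e' \<noteq> {}"
    then obtain v v' where v: "v \<in> e" "v' \<in> e'" "\<sigma> v e = \<sigma> v' e'" unfolding F_def by blast
    then have "v' = v" using \<sigma>_stub[OF that(1) v(1)] \<sigma>_stub[OF that(2) v(2)] by metis
    with v that show False using bij_betw_imp_inj_on[OF \<sigma>[of v]] by (auto dest: inj_onD)
  qed
  have "\<Union>(F ` R) = S"
  proof
    show "\<Union>(F ` R) \<subseteq> S" using \<sigma>_stub by (auto simp: F_def)
    show "S \<subseteq> \<Union>(F ` R)"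
    proof
      fix s assume "s \<in> S"
      then have "s \<in> \<sigma> (snd s) ` {e\<in>R. snd s \<in> e}" using bij_betw_imp_surj_on[OF \<sigma>] by blast
      then show "s \<in> \<Union>(F ` R)" by (auto simp: F_def)
    qed
  qed
  then have "partition_on S (F ` R)"
  proof (rule partition_onI)
    show "disjnt p q" if "p \<in> F ` R" "q \<in> F ` R" "p \<noteq> q" for p q
      using that disjoint_F by (auto simp: disjnt_def)
    show "{} \<notin> F ` R" using card_F by fastforce
  qed
  then have "F ` R \<in> pairings S" using card_F by (auto simp: pairings_def)
  moreover have "(\<lambda>q. snd ` q) ` F ` R = R" using snd_F by (simp add: image_image)
  ultimately show ?thesis by (metis image_eqI)
qed

definition same_degrees :: "nat \<Rightarrow> nat set set \<Rightarrow> nat set set set" where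
  "same_degrees n B = {R. R \<subseteq> all_pairs n \<and> (\<forall>v. card {e\<in>R. v \<in> e} = card {e\<in>B. v \<in> e})}"

text \<open>An edge set with the degrees of B arises from a pairing of the stubs (b, v), v \<in> b, of B:
  at each vertex v, biject its edges onto its stubs.\<close>

lemma card_same_degrees_le:
  assumes B: "B \<subseteq> all_pairs n"
  shows "card (same_degrees n B) \<le> 2 ^ card B * fact (card B)"
proof -
  define S where "S = (SIGMA b:B. b)"
  have fin_B: "finite B" using B finite_all_pairs by (rule finite_subset)
  have card_b: "b \<in> B \<Longrightarrow> card b = 2" for b using B card_all_pairs_elem by blast
  then have fin_b: "b \<in> B \<Longrightarrow> finite b" for b by (simp add: card_ge_0_finite)
  have fin_S: "finite S" unfolding S_def using fin_B fin_b by (rule finite_SigmaI)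
  have "card S = 2 * card B" using fin_B fin_b card_b by (simp add: S_def card_SigmaI)
  have stubs_at: "card {s\<in>S. snd s = v} = card {e\<in>B. v \<in> e}" for v
  proof -
    have "{s\<in>S. snd s = v} = (\<lambda>b. (b, v)) ` {e\<in>B. v \<in> e}" by (auto simp: S_def)
    then show ?thesis by (simp add: card_image inj_on_def)
  qed
  have "same_degrees n B \<subseteq> (\<lambda>P. (\<lambda>q. snd ` q) ` P) ` pairings S"
  proof
    fix R assume R: "R \<in> same_degrees n B"
    then have R_pairs: "R \<subseteq> all_pairs n" by (simp add: same_degrees_def)
    then have fin_R: "finite R" using finite_all_pairs by (rule finite_subset)
    have "\<forall>v. \<exists>h. bij_betw h {e\<in>R. v \<in> e} {s\<in>S. snd s = v}"
      by (intro allI finite_same_card_bij) (use fin_R fin_S R stubs_at in \<open>auto simp: same_degrees_def\<close>)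
    then obtain \<sigma> where "\<forall>v. bij_betw (\<sigma> v) {e\<in>R. v \<in> e} {s\<in>S. snd s = v}"
      by (rule choice[THEN exE])
    moreover have "\<forall>e\<in>R. card e = 2" using R_pairs card_all_pairs_elem by blast
    ultimately show "R \<in> (\<lambda>P. (\<lambda>q. snd ` q) ` P) ` pairings S"
      by (intro stubs_pairing_of_degree_bijections) auto
  qed
  then have "card (same_degrees n B) \<le> card ((\<lambda>P. (\<lambda>q. snd ` q) ` P) ` pairings S)"
    using fin_S by (intro card_mono finite_imageI finite_pairings)
  also have "\<dots> \<le> card (pairings S)" by (rule card_image_le) (use fin_S in \<open>rule finite_pairings\<close>)
  also have "\<dots> \<le> 2 ^ card B * fact (card B)"
    using fin_S \<open>card S = 2 * card B\<close> by (rule card_pairings_le)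
  finally show ?thesis .
qed

lemma card_k_factors_with_diff_le:
  assumes Hs: "is_k_factor n k Hs"
  shows "card {H\<in>k_factors n k. card (H - Hs) = m} \<le> (card Hs choose m) * (2 ^ m * fact m)"
proof -
  define T where "T = (SIGMA B:{B. B \<subseteq> Hs \<and> card B = m}. same_degrees n B)"
  have Hs_pairs: "Hs \<subseteq> all_pairs n" using Hs by (simp add: is_k_factor_def)
  have fin_T: "finite T"
    using k_factor_finite[OF Hs] finite_all_pairs unfolding T_def same_degrees_def by auto
  have "inj_on (\<lambda>H. (Hs - H, H - Hs)) {H\<in>k_factors n k. card (H - Hs) = m}"
    by (rule inj_onI) (simp, blast)
  moreover have "(\<lambda>H. (Hs - H, H - Hs)) ` {H\<in>k_factors n k. card (H - Hs) = m} \<subseteq> T"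
  proof clarify
    fix H assume "H \<in> k_factors n k" and m: "m = card (H - Hs)"
    then have H: "is_k_factor n k H" by (simp add: k_factors_def)
    have "card (Hs - H) = m" using k_factor_card_diff[OF H Hs] m by simp
    moreover have "H - Hs \<in> same_degrees n (Hs - H)"
      using H k_factor_degree_diff[OF H Hs] by (auto simp: same_degrees_def is_k_factor_def)
    ultimately show "(Hs - H, H - Hs) \<in> T" by (auto simp: T_def)
  qed
  ultimately have "card {H\<in>k_factors n k. card (H - Hs) = m} \<le> card T"
    using fin_T by (rule card_inj_on_le)
  also have "card T = (\<Sum>B\<in>{B. B \<subseteq> Hs \<and> card B = m}. card (same_degrees n B))"
    using k_factor_finite[OF Hs] finite_all_pairs unfolding T_def same_degrees_def
    by (intro card_SigmaI) auto
  also have "\<dots> \<le> (\<Sum>B\<in>{B. B \<subseteq> Hs \<and> card B = m}. 2 ^ m * fact m)"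
    using Hs_pairs card_same_degrees_le by (intro sum_mono) fastforce
  also have "\<dots> = (card Hs choose m) * (2 ^ m * fact m)"
    using n_subsets[OF k_factor_finite[OF Hs]] by simp
  finally show ?thesis .
qed

lemma sum_k_factors_by_diff_le:
  assumes Hs: "is_k_factor n k Hs" and p: "0 \<le> p"
  shows "(\<Sum>H\<in>{H\<in>k_factors n k. Q (card (H - Hs))}. p ^ card (H - Hs))
     \<le> (\<Sum>m\<in>{m. m \<le> card Hs \<and> Q m}. real (card Hs choose m) * 2 ^ m * fact m * p ^ m)"
proof -
  let ?K = "{H\<in>k_factors n k. Q (card (H - Hs))}"
  have "(\<Sum>H\<in>?K. p ^ card (H - Hs))
      = (\<Sum>m\<in>{m. m \<le> card Hs \<and> Q m}. \<Sum>H\<in>{H. H \<in> ?K \<and> card (H - Hs) = m}. p ^ card (H - Hs))"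
  proof (rule sum.group[symmetric])
    show "finite ?K" using finite_k_factors by simp
    show "finite {m. m \<le> card Hs \<and> Q m}" by simp
    show "(\<lambda>H. card (H - Hs)) ` ?K \<subseteq> {m. m \<le> card Hs \<and> Q m}"
      using k_factor_card_diff_le[OF _ Hs] by (auto simp: k_factors_def)
  qed
  also have "\<dots> \<le> (\<Sum>m\<in>{m. m \<le> card Hs \<and> Q m}. real (card Hs choose m) * 2 ^ m * fact m * p ^ m)"
  proof (rule sum_mono)
    fix m
    have "card {H. H \<in> ?K \<and> card (H - Hs) = m} \<le> card {H\<in>k_factors n k. card (H - Hs) = m}"
      using finite_k_factors by (intro card_mono) auto
    also have "\<dots> \<le> (card Hs choose m) * (2 ^ m * fact m)" by (rule card_k_factors_with_diff_le[OF Hs])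
    finally have "real (card {H. H \<in> ?K \<and> card (H - Hs) = m})
        \<le> real ((card Hs choose m) * (2 ^ m * fact m))" by (rule of_nat_mono)
    then have "real (card {H. H \<in> ?K \<and> card (H - Hs) = m}) * p ^ m
        \<le> real (card Hs choose m) * 2 ^ m * fact m * p ^ m"
      using p by (intro mult_right_mono) (simp_all add: mult.assoc)
    then show "(\<Sum>H\<in>{H. H \<in> ?K \<and> card (H - Hs) = m}. p ^ card (H - Hs))
        \<le> real (card Hs choose m) * 2 ^ m * fact m * p ^ m" by simp
  qed
  finally show ?thesis .
qed

section \<open>Probability estimates\<close>

lemma prob_gnp_superset:
  assumes R: "R \<subseteq> all_pairs n" and p: "0 \<le> p" "p \<le> 1"
  shows "measure_pmf.prob (gnp n p) {G. R \<subseteq> G} = p ^ card R"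
proof -
  define A where "A = all_pairs n"
  have fin_A: "finite A" unfolding A_def by (rule finite_all_pairs)
  have "(\<lambda>f. {e \<in> A. f e}) -` {G. R \<subseteq> G} = Pi A (\<lambda>e. if e \<in> R then {True} else UNIV)"
    using R unfolding A_def Pi_def by auto
  then have "measure_pmf.prob (gnp n p) {G. R \<subseteq> G}
      = measure_pmf.prob (Pi_pmf A False (\<lambda>_. bernoulli_pmf p)) (Pi A (\<lambda>e. if e \<in> R then {True} else UNIV))"
    unfolding gnp_def A_def[symmetric] by (simp only: measure_map_pmf)
  also have "\<dots> = (\<Prod>e\<in>A. measure_pmf.prob (bernoulli_pmf p) (if e \<in> R then {True} else UNIV))"
    by (rule measure_Pi_pmf_Pi[OF fin_A])
  also have "\<dots> = (\<Prod>e\<in>A. if e \<in> R then p else 1)"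
    by (rule prod.cong[OF refl]) (use p in \<open>simp add: measure_pmf_single\<close>)
  also have "\<dots> = p ^ card (A \<inter> R)" using fin_A by (simp add: prod.If_cases Int_def)
  also have "A \<inter> R = R" using R unfolding A_def by auto
  finally show ?thesis .
qed

lemma finite_set_pmf_gnp: "finite (set_pmf (gnp n p))"
proof -
  have "set_pmf (gnp n p) \<subseteq> Pow (all_pairs n)" unfolding gnp_def by auto
  then show ?thesis by (rule finite_subset) (simp add: finite_all_pairs)
qed

lemma prob_estimator_le_sum:
  fixes Hhat :: "nat set set \<Rightarrow> nat set set"
  assumes K: "finite K" "\<And>H. H \<in> K \<Longrightarrow> H \<subseteq> all_pairs n"
    and Hhat: "\<And>G0. Hhat (G0 \<union> Hs) \<in> K \<and> Hhat (G0 \<union> Hs) \<subseteq> G0 \<union> Hs"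
    and p: "0 \<le> p" "p \<le> 1"
  shows "measure_pmf.prob (gnp n p) {G0. Q (Hhat (G0 \<union> Hs))} \<le> (\<Sum>H\<in>{H\<in>K. Q H}. p ^ card (H - Hs))"
proof -
  have "{G0. Q (Hhat (G0 \<union> Hs))} \<subseteq> (\<Union>H\<in>{H\<in>K. Q H}. {G. H - Hs \<subseteq> G})" using Hhat by blast
  then have "measure_pmf.prob (gnp n p) {G0. Q (Hhat (G0 \<union> Hs))}
      \<le> measure_pmf.prob (gnp n p) (\<Union>H\<in>{H\<in>K. Q H}. {G. H - Hs \<subseteq> G})"
    by (rule measure_pmf.finite_measure_mono) simp
  also have "\<dots> \<le> (\<Sum>H\<in>{H\<in>K. Q H}. measure_pmf.prob (gnp n p) {G. H - Hs \<subseteq> G})"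
    by (rule measure_pmf.finite_measure_subadditive_finite) (use K in auto)
  also have "\<dots> = (\<Sum>H\<in>{H\<in>K. Q H}. p ^ card (H - Hs))"
    by (rule sum.cong[OF refl], rule prob_gnp_superset) (use K p in auto)
  finally show ?thesis .
qed

lemma expectation_le_threshold_plus_tail:
  fixes M :: "'a pmf" and f :: "'a \<Rightarrow> real"
  assumes "finite (set_pmf M)" and "\<And>x. f x \<le> c" and "0 \<le> t"
  shows "measure_pmf.expectation M f \<le> t + c * measure_pmf.prob M {x. t \<le> f x}"
proof -
  have integrable: "integrable (measure_pmf M) g" for g :: "'a \<Rightarrow> real"
    using assms(1) by (rule integrable_measure_pmf_finite)
  have "f x \<le> t + c * indicator {x. t \<le> f x} x" for x
    using assms(2)[of x] assms(3) by (cases "t \<le> f x") auto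
  then have "measure_pmf.expectation M f \<le> measure_pmf.expectation M (\<lambda>x. t + c * indicator {x. t \<le> f x} x)"
    by (intro integral_mono integrable)
  also have "\<dots> = t + c * measure_pmf.prob M {x. t \<le> f x}"
    using integrable by (simp add: measure_pmf.prob_space)
  finally show ?thesis .
qed
section \<open>Tail estimates\<close>

lemma choose_mult_fact_le:
  assumes a: "0 < a"
  shows "real (a choose m) * fact m \<le> real a ^ m * exp (- (real m * (real m - 1)) / (2 * real a))"
proof (induction m)
  case 0
  then show ?case by simp
next
  case (Suc m)
  have step: "(a choose Suc m) * Suc m = (a choose m) * (a - m)"
    using binomial_absorption[of m a] binomial_absorb_comp[of a m] by (simp add: mult.commute)
  have "real (a choose Suc m) * fact (Suc m) = real ((a choose Suc m) * Suc m) * fact m"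
    by (simp add: algebra_simps)
  also have "\<dots> = real (a choose m) * fact m * real (a - m)"
    unfolding step by (simp add: mult_ac)
  also have "\<dots> \<le> (real a ^ m * exp (- (real m * (real m - 1)) / (2 * real a))) * (real a * exp (- real m / real a))"
  proof (rule mult_mono[OF Suc])
    show "real (a - m) \<le> real a * exp (- real m / real a)"
    proof (cases "m \<le> a")
      case True
      then have "real (a - m) = real a * (1 - real m / real a)" using a by (simp add: field_simps)
      also have "\<dots> \<le> real a * exp (- real m / real a)"
        using exp_ge_add_one_self[of "- real m / real a"] by (intro mult_left_mono) auto
      finally show ?thesis .
    qed simp
  qed simp_all
  also have "\<dots> = real a ^ Suc m * exp (- (real (Suc m) * (real (Suc m) - 1)) / (2 * real a))"
    using a by (simp add: field_simps flip: exp_add)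
  finally show ?case .
qed

lemma tail_term_le:
  assumes a: "0 < a" and p: "0 \<le> p" and eps: "0 < eps" and ap: "2 * real a * p \<le> 1 + eps"
    and \<beta>: "4 * ln (1 + eps) \<le> \<beta>" and m: "\<beta> * real a \<le> real m" "m \<le> a"
  shows "real (a choose m) * 2 ^ m * fact m * p ^ m \<le> exp (1/2) * exp (- \<beta> / 4) ^ m"
proof -
  define E where "E = exp (- (real m * (real m - 1)) / (2 * real a))"
  have "real (a choose m) * 2 ^ m * fact m * p ^ m = (real (a choose m) * fact m) * (2 * p) ^ m"
    by (simp add: power_mult_distrib)
  also have "\<dots> \<le> (real a ^ m * E) * (2 * p) ^ m"
    unfolding E_def using a p by (intro mult_right_mono choose_mult_fact_le) auto
  also have "\<dots> = (2 * real a * p) ^ m * E" by (simp add: power_mult_distrib)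
  also have "\<dots> \<le> (1 + eps) ^ m * E"
    using a p ap by (intro mult_right_mono power_mono) (auto simp: E_def)
  also have "(1 + eps) ^ m = exp (real m * ln (1 + eps))"
    using eps by (simp add: exp_of_nat_mult)
  also have "\<dots> \<le> exp (real m * \<beta> / 4)"
    using mult_left_mono[OF \<beta>, of "real m"] by simp
  also have "E \<le> exp (1/2 - real m * \<beta> / 2)"
  proof -
    have "real m * (\<beta> * real a) - real a \<le> real m * (real m - 1)"
      using mult_left_mono[OF m(1), of "real m"] m(2) by (simp add: algebra_simps)
    then show ?thesis unfolding E_def using a by (simp add: field_simps)
  qed
  then have "exp (real m * \<beta> / 4) * E \<le> exp (real m * \<beta> / 4) * exp (1/2 - real m * \<beta> / 2)"
    by simp
  also have "\<dots> = exp (1/2) * exp (- \<beta> / 4) ^ m"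
    by (simp add: field_simps flip: exp_add exp_of_nat_mult)
  finally show ?thesis by (simp add: E_def)
qed

lemma sum_power_atLeastAtMost_le:
  fixes r :: real
  assumes "0 \<le> r" "r < 1"
  shows "(\<Sum>m=M..N. r ^ m) \<le> r ^ M / (1 - r)"
proof -
  have "(\<Sum>m=M..N. r ^ m) = (if N < M then 0 else (r ^ M - r ^ Suc N) / (1 - r))"
    using assms by (simp add: sum_gp)
  also have "\<dots> \<le> r ^ M / (1 - r)" using assms by (auto intro!: divide_right_mono)
  finally show ?thesis .
qed

lemma exp_geometric_tail_le:
  assumes \<beta>: "0 < \<beta>" "\<beta> < 1" and n: "2 \<le> n" "8 * ln (real n) / real n \<le> \<beta>\<^sup>2"
    and a: "real n \<le> 2 * real a" and M: "\<beta> * real a \<le> real M"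
  shows "exp (- \<beta> / 4) ^ M / (1 - exp (- \<beta> / 4)) \<le> \<beta>"
proof -
  have ln_n: "8 * ln (real n) \<le> \<beta>\<^sup>2 * real n" using n by (simp add: field_simps)
  have "ln (real n) \<le> \<beta> * (\<beta> * real a) / 4"
    using ln_n mult_left_mono[OF a, of "\<beta>\<^sup>2"] by (simp add: power2_eq_square)
  also have "\<dots> \<le> \<beta> * real M / 4" using M \<beta> by (simp add: mult_left_mono)
  finally have "real n \<le> exp (\<beta> * real M / 4)"
    using n by (metis exp_le_cancel_iff exp_ln of_nat_0_less_iff le_trans pos2 less_le_trans)
  then have num: "exp (- \<beta> / 4) ^ M \<le> 1 / real n"
    using n by (simp add: exp_minus field_simps flip: exp_of_nat_mult)
  have "1 + \<beta> / 4 \<le> exp (\<beta> / 4)" by (rule exp_ge_add_one_self)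
  then have den: "\<beta> / (4 + \<beta>) \<le> 1 - exp (- \<beta> / 4)"
    using \<beta> by (simp add: exp_minus field_simps)
  have "ln 2 \<le> ln (real n)" using n by simp
  then have "4 + \<beta> \<le> \<beta>\<^sup>2 * real n" using ln_n ln2_ge_two_thirds \<beta> by linarith
  have "exp (- \<beta> / 4) ^ M / (1 - exp (- \<beta> / 4)) \<le> (1 / real n) / (\<beta> / (4 + \<beta>))"
    using num den \<beta> by (intro frac_le) auto
  also have "\<dots> = (4 + \<beta>) / (\<beta> * real n)" using \<beta> n by (simp add: field_simps)
  also have "\<dots> \<le> \<beta>"
    using \<open>4 + \<beta> \<le> \<beta>\<^sup>2 * real n\<close> \<beta> n by (simp add: pos_divide_le_eq power2_eq_square mult.assoc)
  finally show ?thesis .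
qed

lemma sum_tail_terms_le:
  assumes n: "2 \<le> n" "8 * ln (real n) / real n \<le> \<beta>\<^sup>2" and a: "real n \<le> 2 * real a"
    and p: "0 \<le> p" and ap: "2 * real a * p \<le> 1 + eps" and eps: "0 < eps"
    and \<beta>: "4 * ln (1 + eps) \<le> \<beta>" "\<beta> < 1"
  shows "(\<Sum>m\<in>{m. m \<le> a \<and> \<beta> * real a \<le> real m}. real (a choose m) * 2 ^ m * fact m * p ^ m)
    \<le> exp (1/2) * \<beta>"
proof -
  define r where "r = exp (- \<beta> / 4)"
  define M where "M = nat \<lceil>\<beta> * real a\<rceil>"
  have \<beta>_pos: "0 < \<beta>" using \<beta>(1) ln_gt_zero[of "1 + eps"] eps by linarith
  have a_pos: "0 < a" using n a by linarith
  have r: "0 \<le> r" "r < 1" using \<beta>_pos by (auto simp: r_def)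
  have "(\<Sum>m\<in>{m. m \<le> a \<and> \<beta> * real a \<le> real m}. real (a choose m) * 2 ^ m * fact m * p ^ m)
      \<le> (\<Sum>m\<in>{m. m \<le> a \<and> \<beta> * real a \<le> real m}. exp (1/2) * r ^ m)"
    unfolding r_def using a_pos p ap eps \<beta>(1) by (intro sum_mono tail_term_le) auto
  also have "\<dots> \<le> (\<Sum>m=M..a. exp (1/2) * r ^ m)"
    using r by (intro sum_mono2) (auto simp: M_def nat_le_iff ceiling_le_iff)
  also have "\<dots> = exp (1/2) * (\<Sum>m=M..a. r ^ m)" by (simp add: sum_distrib_left)
  also have "\<dots> \<le> exp (1/2) * (r ^ M / (1 - r))"
    using r by (intro mult_left_mono sum_power_atLeastAtMost_le) auto
  also have "\<dots> \<le> exp (1/2) * \<beta>"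
    unfolding r_def using \<beta>_pos \<beta>(2) n a
    by (intro mult_left_mono exp_geometric_tail_le) (auto simp: M_def)
  finally show ?thesis .
qed

lemma exp_half_le_2: "exp (1/2 :: real) \<le> 2"
proof (rule power2_le_imp_le)
  have "exp (1/2 :: real) ^ 2 = exp 1" by (simp add: power2_eq_square flip: exp_add)
  then show "exp (1/2 :: real) ^ 2 \<le> 2 ^ 2" using exp_le by simp
qed simp

section \<open>The error of the estimator\<close>

lemma prob_large_loss_le:
  fixes Hhat :: "nat set set \<Rightarrow> nat set set"
  assumes k: "1 \<le> k" and Hs: "is_k_factor n k Hs"
    and Hhat: "\<And>G0. Hhat (G0 \<union> Hs) \<in> k_factors n k \<and> Hhat (G0 \<union> Hs) \<subseteq> G0 \<union> Hs"
    and p: "0 \<le> p" "p \<le> 1" and kp: "real k * real n * p \<le> 1 + eps" and eps: "0 < eps"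
    and \<beta>: "4 * ln (1 + eps) \<le> \<beta>" "8 * ln (real n) / real n \<le> \<beta>\<^sup>2"
  shows "measure_pmf.prob (gnp n p) {G0. 2 * \<beta> \<le> recon_loss Hs (Hhat (G0 \<union> Hs))} \<le> exp (1/2) * \<beta>"
proof -
  have \<beta>_pos: "0 < \<beta>" using \<beta>(1) ln_gt_zero[of "1 + eps"] eps by linarith
  consider "n \<le> 1" | "1 \<le> exp (1/2) * \<beta>" | "2 \<le> n" "\<beta> < 1"
    using \<beta>_pos mult_right_mono[of 1 "exp (1/2)" \<beta>] by fastforce
  then show ?thesis
  proof cases
    case 1
    then have "Hs = {}" using Hs all_pairs_eq_empty by (auto simp: is_k_factor_def)
    \<comment> \<open>so the loss is a division by zero, which is 0\<close>
    then have "{G0. 2 * \<beta> \<le> recon_loss Hs (Hhat (G0 \<union> Hs))} = {}"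
      using \<beta>_pos by (simp add: recon_loss_def)
    then show ?thesis using \<beta>_pos by simp
  next
    case 2
    then show ?thesis using measure_pmf.prob_le_1 order_trans by blast
  next
    case 3
    define a where "a = card Hs"
    have a: "2 * a = k * n" unfolding a_def by (rule k_factor_card[OF Hs])
    then have a_real: "2 * real a = real k * real n" by (metis of_nat_mult of_nat_numeral)
    have "1 * real n \<le> real k * real n" using k by (intro mult_right_mono) auto
    then have n_le: "real n \<le> 2 * real a" using a_real by simp
    then have a_pos: "0 < a" using 3 by linarith
    have ap: "2 * real a * p \<le> 1 + eps" using kp a_real by simp
    have "2 * \<beta> \<le> recon_loss Hs H \<longleftrightarrow> \<beta> * real a \<le> real (card (H - Hs))" if "H \<in> k_factors n k" for H
      using recon_loss_k_factor[OF _ Hs, of H] that a_pos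
      by (simp add: k_factors_def a_def pos_le_divide_eq mult.commute mult.left_commute)
    then have "{H\<in>k_factors n k. 2 * \<beta> \<le> recon_loss Hs H} = {H\<in>k_factors n k. \<beta> * real a \<le> real (card (H - Hs))}"
      by blast
    then have "measure_pmf.prob (gnp n p) {G0. 2 * \<beta> \<le> recon_loss Hs (Hhat (G0 \<union> Hs))}
        \<le> (\<Sum>H\<in>{H\<in>k_factors n k. \<beta> * real a \<le> real (card (H - Hs))}. p ^ card (H - Hs))"
      using prob_estimator_le_sum[OF finite_k_factors _ Hhat p, where Q = "\<lambda>H. 2 * \<beta> \<le> recon_loss Hs H"]
      by (simp add: k_factors_def is_k_factor_def)
    also have "\<dots> \<le> (\<Sum>m\<in>{m. m \<le> a \<and> \<beta> * real a \<le> real m}. real (a choose m) * 2 ^ m * fact m * p ^ m)"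
      unfolding a_def by (rule sum_k_factors_by_diff_le[OF Hs p(1)])
    also have "\<dots> \<le> exp (1/2) * \<beta>"
      using 3 \<beta> n_le p ap eps by (intro sum_tail_terms_le) auto
    finally show ?thesis .
  qed
qed

theorem mainTheorem3:
  fixes n k :: nat and lam eps :: real
    and Hstar :: "nat set set"
    and Hhat :: "nat set set \<Rightarrow> nat set set"
  assumes k_pos: "k \<ge> 1"
    and even: "even (k * n)"
    and p_range: "lam / real n \<in> {0..1}"
    and eps: "eps \<in> {0<..<1}"
    and lam_k: "lam * real k \<le> 1 + eps"
    and Hstar: "Hstar \<in> k_factors n k"
    and estimator: "\<And>G. (\<exists>H\<in>k_factors n k. H \<subseteq> G) \<Longrightarrow> Hhat G \<in> k_factors n k \<and> Hhat G \<subseteq> G"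
  defines "\<beta> \<equiv> max (4 * ln (1 + eps)) (sqrt (8 * ln (real n) / real n))"
  shows "measure_pmf.prob (gnp n (lam / real n))
            {G0. recon_loss Hstar (Hhat (G0 \<union> Hstar)) \<ge> 2 * \<beta>} \<le> exp (1/2) * \<beta>
       \<and> measure_pmf.expectation (gnp n (lam / real n))
            (\<lambda>G0. recon_loss Hstar (Hhat (G0 \<union> Hstar))) \<le> 6 * \<beta>"
proof -
  let ?loss = "\<lambda>G0. recon_loss Hstar (Hhat (G0 \<union> Hstar))"
  have Hs: "is_k_factor n k Hstar" using Hstar by (simp add: k_factors_def)
  have Hhat: "Hhat (G0 \<union> Hstar) \<in> k_factors n k \<and> Hhat (G0 \<union> Hstar) \<subseteq> G0 \<union> Hstar" for G0
    using Hstar by (intro estimator) blast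
  have "0 \<le> 8 * ln (real n) / real n" by (cases "n = 0") auto
  moreover have "sqrt (8 * ln (real n) / real n) \<le> \<beta>" unfolding \<beta>_def by simp
  ultimately have \<beta>: "4 * ln (1 + eps) \<le> \<beta>" "8 * ln (real n) / real n \<le> \<beta>\<^sup>2"
    using power_mono[of "sqrt (8 * ln (real n) / real n)" \<beta> 2] unfolding \<beta>_def by auto
  have eps0: "0 < eps" using eps by simp
  have \<beta>_pos: "0 < \<beta>" using \<beta>(1) ln_gt_zero[of "1 + eps"] eps0 by linarith
  have kp: "real k * real n * (lam / real n) \<le> 1 + eps"
    using lam_k eps by (cases "n = 0") (auto simp: mult.commute)
  have P: "measure_pmf.prob (gnp n (lam / real n)) {G0. 2 * \<beta> \<le> ?loss G0} \<le> exp (1/2) * \<beta>"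
    using k_pos Hs Hhat p_range kp eps \<beta> by (intro prob_large_loss_le) auto
  have "measure_pmf.expectation (gnp n (lam / real n)) ?loss
      \<le> 2 * \<beta> + 2 * measure_pmf.prob (gnp n (lam / real n)) {G0. 2 * \<beta> \<le> ?loss G0}"
    using Hhat Hs \<beta>_pos
    by (intro expectation_le_threshold_plus_tail finite_set_pmf_gnp recon_loss_le_2)
       (auto simp: k_factors_def)
  also have "\<dots> \<le> 6 * \<beta>" using P mult_right_mono[OF exp_half_le_2, of \<beta>] \<beta>_pos by linarith
  finally show ?thesis using P by simp
qed

end
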